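(* $\displaystyle\liminf_{k\to\infty}\frac{\Gamma(k)}{k}=\frac32.$
   Context: The Thue–Morse word is $\mathbf t=\mathbf t_1\mathbf t_2\cdots$ where $\mathbf t_i\in\{0,1\}$ has the parity of the number of $1$'s in the binary expansion of $i-1$. For positive integers $\alpha\le\beta$, $\langle\alpha,\beta\rangle=\mathbf t_\alpha\cdots\mathbf t_\beta$. A $k$-anti-power is a word $w_1\cdots w_k$ with $w_1,\dots,w_k$ pairwise distinct words of equal length. $\mathcal F(k)$ is the set of odd positive integers $m$ such that $\langle 1,km\rangle$ is a $k$-anti-power. For $k\ge3$, $\Gamma(k)=\sup\big((2\mathbb Z^+-1)\setminus\mathcal F(k)\big)$, which is a finite odd positive integer. *)

theory Defs
  imports "HOL-Library.Liminf_Limsup" "HOL-Library.Extended_Real"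
begin

fun bin_ones :: "nat \<Rightarrow> nat" where
  "bin_ones n = (if n = 0 then 0 else n mod 2 + bin_ones (n div 2))"

declare bin_ones.simps [simp del]

text \<open>Thue--Morse word, 1-indexed: tm i is the parity of the number of 1s in
  the binary expansion of i - 1 (for i \<ge> 1).\<close>
definition tm :: "nat \<Rightarrow> nat" where
  "tm i = bin_ones (i - 1) mod 2"

definition tm_factor :: "nat \<Rightarrow> nat \<Rightarrow> nat list" where
  "tm_factor \<alpha> \<beta> = map tm [\<alpha>..<Suc \<beta>]"

definition anti_power :: "nat \<Rightarrow> 'a list \<Rightarrow> bool" where
  "anti_power k w \<longleftrightarrow> (\<exists>m. length w = k * m \<and>
      distinct (map (\<lambda>j. take m (drop (j * m) w)) [0..<k]))"

definition F :: "nat \<Rightarrow> nat set" where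
  "F k = {m. odd m \<and> 0 < m \<and> anti_power k (tm_factor 1 (k * m))}"

text \<open>Gamma k = sup of the odd positive integers not in F k (finite for k \<ge> 3).\<close>
definition Gamma :: "nat \<Rightarrow> nat" where
  "Gamma k = Sup {m. odd m \<and> 0 < m \<and> m \<notin> F k}"

end

theory Submission imports Defs begin

text \<open>
  Upper bound: the Thue--Morse word is recognizable, i.e.\ equal factors of length at least
  \<open>3\<cdot>2\<^sup>r + 1\<close> occur only at positions congruent modulo \<open>2\<^sup>r\<^sup>+\<^sup>1\<close>. For odd \<open>m\<close> the blocks
  \<open>i\<cdot>m\<close> and \<open>j\<cdot>m\<close> with \<open>0 < j - i < 2\<^sup>r\<^sup>+\<^sup>1\<close> are not congruent, so every odd
  \<open>m > 3\<cdot>2\<^sup>n\<close> lies in \<open>F(2\<^sup>n\<^sup>+\<^sup>1)\<close> and \<open>\<Gamma>(2\<^sup>n\<^sup>+\<^sup>1) \<le> 3\<cdot>2\<^sup>n\<close>.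

  Lower bound: a factor of length at most \<open>3\<cdot>2\<^sup>R - u\<close> starting at \<open>a\<cdot>2\<^sup>R + u\<close> is determined
  by the three letters at \<open>a, a+1, a+2\<close>. With \<open>t = 2\<^sup>R\<^sup>/\<^sup>2\<close> (\<open>R\<close> even) and \<open>m = 3t\<^sup>2 + 1 - t\<close>,
  the blocks of index \<open>t + 1\<close> and \<open>t + 1 + t\<^sup>2\<close> (counting from 0) start at \<open>a\<cdot>t\<^sup>2 + 1\<close> and
  \<open>b\<cdot>t\<^sup>2 + 1\<close> with \<open>a = 3t + 2\<close>, \<open>b = a\<cdot>t + 3\<close>, and the letters at \<open>a, a+1, a+2\<close> agree with
  those at \<open>b, b+1, b+2\<close>; odd \<open>R\<close> is similar. Hence \<open>\<Gamma>(k) \<ge> 3\<cdot>2\<^sup>R - O(2\<^sup>R\<^sup>/\<^sup>2)\<close> once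
  \<open>k > 2\<^sup>R + O(2\<^sup>R\<^sup>/\<^sup>2)\<close>, and choosing \<open>R\<close> with \<open>2\<^sup>R\<^sup>+\<^sup>1 \<approx> k\<close> gives \<open>\<Gamma>(k) \<ge> 3k/2 - O(\<surd>k)\<close>.
\<close>

definition thue_morse :: "nat \<Rightarrow> nat" where
  "thue_morse n = bin_ones n mod 2"

definition same_factor :: "nat \<Rightarrow> nat \<Rightarrow> nat \<Rightarrow> bool" where
  "same_factor p q L \<longleftrightarrow> (\<forall>i<L. thue_morse (p + i) = thue_morse (q + i))"

lemma tm_Suc: "tm (Suc n) = thue_morse n"
  by (simp add: tm_def thue_morse_def)

lemma tm_factor_1: "tm_factor 1 N = map thue_morse [0..<N]"
proof -
  have "tm_factor 1 N = map tm (map Suc [0..<N])"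
    unfolding tm_factor_def by (simp add: map_Suc_upt)
  then show ?thesis by (simp add: tm_Suc)
qed

lemma bin_ones_mod_div: "bin_ones n = n mod 2 + bin_ones (n div 2)"
  by (cases "n = 0") (simp_all add: bin_ones.simps[of n] bin_ones.simps[of 0])

lemma bin_ones_double: "bin_ones (2 * n) = bin_ones n"
  using bin_ones_mod_div[of "2 * n"] by simp

lemma bin_ones_Suc_double: "bin_ones (2 * n + 1) = Suc (bin_ones n)"
  using bin_ones_mod_div[of "2 * n + 1"] by simp

lemma bin_ones_mult_power2_add:
  "v < 2 ^ R \<Longrightarrow> bin_ones (x * 2 ^ R + v) = bin_ones x + bin_ones v"
proof (induction R arbitrary: v)
  case 0
  then show ?case by (simp add: bin_ones.simps[of 0])
next
  case (Suc R)
  have step: "bin_ones (v + 2 * c) = v mod 2 + bin_ones (v div 2 + c)" for c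
    by (subst bin_ones_mod_div) (simp add: add.commute)
  have "bin_ones (x * 2 ^ Suc R + v) = v mod 2 + bin_ones (x * 2 ^ R + v div 2)"
    using step[of "x * 2 ^ R"] by (simp add: ac_simps)
  also have "\<dots> = bin_ones x + bin_ones v"
    using Suc by (simp add: bin_ones_mod_div[of v])
  finally show ?case .
qed

lemma bin_ones_small:
  "bin_ones 0 = 0" "bin_ones 1 = 1" "bin_ones 2 = 1" "bin_ones 3 = 2" "bin_ones 4 = 1"
  "bin_ones 5 = 2" "bin_ones 6 = 2" "bin_ones 10 = 2" "bin_ones 11 = 3" "bin_ones 12 = 2"
  "bin_ones 13 = 3"
  by (simp_all add: bin_ones.simps)

lemma thue_morse_le_1 [simp]: "thue_morse n \<le> 1"
  by (simp add: thue_morse_def)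

lemma thue_morse_double: "thue_morse (2 * n) = thue_morse n"
  by (simp add: thue_morse_def bin_ones_double)

lemma thue_morse_Suc_double: "thue_morse (2 * n + 1) = 1 - thue_morse n"
  unfolding thue_morse_def using bin_ones_Suc_double[of n] by presburger

lemma thue_morse_half:
  "thue_morse n = (if even n then thue_morse (n div 2) else 1 - thue_morse (n div 2))"
  using thue_morse_double[of "n div 2"] thue_morse_Suc_double[of "n div 2"]
  by (metis even_two_times_div_two odd_two_times_div_two_succ)

lemma thue_morse_mult_power2_add:
  "v < 2 ^ R \<Longrightarrow> thue_morse (x * 2 ^ R + v) = (thue_morse x + bin_ones v) mod 2"
  by (simp add: thue_morse_def bin_ones_mult_power2_add mod_add_left_eq)

lemma thue_morse_Suc_double_neq: "thue_morse (2 * n + 1) \<noteq> thue_morse (2 * n)"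
  unfolding thue_morse_double thue_morse_Suc_double using thue_morse_le_1[of n]
  by (cases "thue_morse n") auto

lemma thue_morse_no_three_equal:
  "\<not> (thue_morse z = thue_morse (z + 1) \<and> thue_morse (z + 1) = thue_morse (z + 2))"
proof (cases "even z")
  case True
  then obtain w where "z = 2 * w" by blast
  then show ?thesis using thue_morse_Suc_double_neq[of w] by simp
next
  case False
  then obtain w where "z = 2 * w + 1" by (rule oddE)
  then have "z + 1 = 2 * (w + 1)" "z + 2 = 2 * (w + 1) + 1" by simp_all
  then show ?thesis using thue_morse_Suc_double_neq[of "w + 1"] by metis
qed

subsection \<open>Recognizability\<close>

lemma same_factor_sym: "same_factor p q L \<Longrightarrow> same_factor q p L"
  unfolding same_factor_def by simp

lemma same_factor_mono: "same_factor p q L \<Longrightarrow> L' \<le> L \<Longrightarrow> same_factor p q L'"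
  unfolding same_factor_def by simp

text \<open>Between an even and an odd position the two length-4 factors would force three equal
  consecutive letters at half the odd position.\<close>
lemma same_factor_4_imp_same_parity:
  assumes "same_factor p q 4"
  shows "even p \<longleftrightarrow> even q"
proof -
  have False if f: "same_factor (2 * x) (2 * y + 1) 4" for x y
  proof -
    note letter = f[unfolded same_factor_def, rule_format]
    have e: "thue_morse (2 * x) = thue_morse (2 * y + 1)"
      "thue_morse (2 * x + 1) = thue_morse (2 * (y + 1))"
      "thue_morse (2 * (x + 1)) = thue_morse (2 * (y + 1) + 1)"
      "thue_morse (2 * (x + 1) + 1) = thue_morse (2 * (y + 2))"
      using letter[of 0] letter[of 1] letter[of 2] letter[of 3]
      by (simp_all add: algebra_simps eval_nat_numeral)
    have "thue_morse y = thue_morse (y + 1) \<and> thue_morse (y + 1) = thue_morse (y + 2)"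
      using e thue_morse_le_1[of x] thue_morse_le_1[of "x + 1"] thue_morse_le_1[of y]
        thue_morse_le_1[of "y + 1"] thue_morse_le_1[of "y + 2"]
      unfolding thue_morse_double thue_morse_Suc_double by linarith
    then show False using thue_morse_no_three_equal by blast
  qed
  then show ?thesis
    using assms same_factor_sym by (metis evenE oddE)
qed

lemma same_factor_half:
  assumes f: "same_factor p q L" and parity: "even p \<longleftrightarrow> even q"
  shows "same_factor (p div 2) (q div 2) ((L + 1) div 2)"
  unfolding same_factor_def
proof (intro allI impI)
  fix i assume "i < (L + 1) div 2"
  then have eq: "thue_morse (p + 2 * i) = thue_morse (q + 2 * i)"
    using f unfolding same_factor_def by simp
  moreover have "thue_morse (n + 2 * i) =
      (if even n then thue_morse (n div 2 + i) else 1 - thue_morse (n div 2 + i))" for n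
    by (subst thue_morse_half) (simp add: add.commute)
  ultimately show "thue_morse (p div 2 + i) = thue_morse (q div 2 + i)"
    using parity thue_morse_le_1[of "p div 2 + i"] thue_morse_le_1[of "q div 2 + i"]
    by (auto split: if_splits)
qed

lemma same_factor_imp_mod_power2_eq:
  "same_factor p q L \<Longrightarrow> 3 * 2 ^ r + 1 \<le> L \<Longrightarrow> p mod 2 ^ (r + 1) = q mod 2 ^ (r + 1)"
proof (induction r arbitrary: p q L)
  case 0
  then have "even p \<longleftrightarrow> even q"
    using same_factor_4_imp_same_parity same_factor_mono by simp
  then have "p mod 2 = q mod 2" by presburger
  then show ?case by simp
next
  case (Suc r)
  have "(4::nat) \<le> 3 * 2 ^ Suc r + 1"
    by simp
  then have "4 \<le> L"
    using Suc.prems(2) by linarith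
  then have "same_factor p q 4"
    using Suc.prems(1) same_factor_mono by blast
  then have parity: "even p \<longleftrightarrow> even q" by (rule same_factor_4_imp_same_parity)
  have "(p div 2) mod 2 ^ (r + 1) = (q div 2) mod 2 ^ (r + 1)"
    using Suc.IH[OF same_factor_half[OF Suc.prems(1) parity]] Suc.prems(2) by simp
  moreover have "p mod 2 = q mod 2"
    using parity by presburger
  ultimately show ?case
    using mod_mult2_eq[of p 2 "2 ^ (r + 1)"] mod_mult2_eq[of q 2 "2 ^ (r + 1)"]
    by (simp add: mult.commute)
qed

subsection \<open>Anti-powers of the Thue--Morse word\<close>

lemma take_drop_map_upt_block:
  "j < k \<Longrightarrow> take m (drop (j * m) (map f [0..<k * m])) = map f [j * m..<j * m + m]"
proof -
  assume "j < k"
  then have "j * m + m \<le> k * m"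
    by (metis Suc_leI add.commute mult_Suc mult_le_mono1)
  then show ?thesis by (simp add: drop_map take_map)
qed

lemma anti_power_iff_inj_on_blocks:
  assumes "length w = k * m"
  shows "anti_power k w \<longleftrightarrow> inj_on (\<lambda>j. take m (drop (j * m) w)) {0..<k}"
proof
  assume "anti_power k w"
  then obtain m' where "k * m = k * m'"
    and "distinct (map (\<lambda>j. take m' (drop (j * m') w)) [0..<k])"
    using assms unfolding anti_power_def by auto
  then show "inj_on (\<lambda>j. take m (drop (j * m) w)) {0..<k}"
    by (cases "k = 0") (auto simp: distinct_map)
next
  assume "inj_on (\<lambda>j. take m (drop (j * m) w)) {0..<k}"
  then show "anti_power k w"
    unfolding anti_power_def using assms by (intro exI[of _ m]) (simp add: distinct_map)
qed

lemma mem_F_iff: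
  "m \<in> F k \<longleftrightarrow> odd m \<and> 0 < m \<and> (\<forall>i j. i < j \<longrightarrow> j < k \<longrightarrow> \<not> same_factor (i * m) (j * m) m)"
proof -
  define block where "block j = take m (drop (j * m) (map thue_morse [0..<k * m]))" for j
  have block_eq: "block i = block j \<longleftrightarrow> same_factor (i * m) (j * m) m" if "i < k" "j < k" for i j
    unfolding block_def take_drop_map_upt_block[OF that(1)] take_drop_map_upt_block[OF that(2)]
      same_factor_def by (auto simp: list_eq_iff_nth_eq)
  have "anti_power k (map thue_morse [0..<k * m]) \<longleftrightarrow> inj_on block {0..<k}"
    unfolding block_def by (rule anti_power_iff_inj_on_blocks) simp
  also have "\<dots> \<longleftrightarrow> (\<forall>i j. i < j \<longrightarrow> j < k \<longrightarrow> \<not> same_factor (i * m) (j * m) m)"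
  proof
    assume inj: "inj_on block {0..<k}"
    show "\<forall>i j. i < j \<longrightarrow> j < k \<longrightarrow> \<not> same_factor (i * m) (j * m) m"
    proof (intro allI impI notI)
      fix i j assume "i < j" "j < k" "same_factor (i * m) (j * m) m"
      then show False using inj_onD[OF inj] block_eq by force
    qed
  next
    assume distinct: "\<forall>i j. i < j \<longrightarrow> j < k \<longrightarrow> \<not> same_factor (i * m) (j * m) m"
    show "inj_on block {0..<k}"
    proof (rule inj_onI, rule ccontr)
      fix i j assume "i \<in> {0..<k}" "j \<in> {0..<k}" "block i = block j" "i \<noteq> j"
      then show False
        using distinct block_eq same_factor_sym by (metis atLeastLessThan_iff linorder_neqE_nat)
    qed
  qed
  finally show ?thesis
    unfolding F_def tm_factor_1 by simp
qed

lemma mem_F_if_large: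
  assumes k: "k \<le> 2 ^ (r + 1)" and m: "odd m" "3 * 2 ^ r + 1 \<le> m"
  shows "m \<in> F k"
proof -
  have "\<not> same_factor (i * m) (j * m) m" if ij: "i < j" "j < k" for i j
  proof
    assume "same_factor (i * m) (j * m) m"
    then have congruent: "(i * m) mod 2 ^ (r + 1) = (j * m) mod 2 ^ (r + 1)"
      using same_factor_imp_mod_power2_eq m(2) by blast
    have "i * m \<le> j * m"
      using ij by simp
    then have "2 ^ (r + 1) dvd j * m - i * m"
      using congruent[symmetric] by (rule mod_eq_dvd_iff_nat[THEN iffD1])
    then have "2 ^ (r + 1) dvd (j - i) * m"
      by (simp only: diff_mult_distrib)
    moreover have "coprime ((2::nat) ^ (r + 1)) m"
      using m(1) by simp
    ultimately have "2 ^ (r + 1) dvd j - i"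
      using coprime_dvd_mult_left_iff by blast
    moreover have "0 < j - i" "j - i < 2 ^ (r + 1)"
      using ij k by auto
    ultimately show False
      using nat_dvd_not_less by blast
  qed
  then show ?thesis
    unfolding mem_F_iff using m odd_pos by blast
qed

lemma le_if_not_mem_F:
  assumes "k \<le> 2 ^ (r + 1)" "odd m" "m \<notin> F k"
  shows "m \<le> 3 * 2 ^ r"
proof (rule ccontr)
  assume "\<not> m \<le> 3 * 2 ^ r"
  then have "3 * 2 ^ r + 1 \<le> m" by simp
  then show False using mem_F_if_large assms by blast
qed

lemma Gamma_upper:
  assumes "k \<le> 2 ^ (r + 1)"
  shows "Gamma k \<le> 3 * 2 ^ r"
proof (cases "{m. odd m \<and> 0 < m \<and> m \<notin> F k} = {}")
  case True
  then show ?thesis unfolding Gamma_def True by simp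
next
  case False
  then show ?thesis
    unfolding Gamma_def using le_if_not_mem_F[OF assms] by (intro cSup_least) auto
qed

lemma le_Gamma:
  assumes "odd m" "m \<notin> F k"
  shows "m \<le> Gamma k"
proof -
  have "k \<le> 2 ^ (k + 1)"
    using less_exp[of k] power_increasing[of k "k + 1" "2::nat"] by linarith
  then have bdd: "bdd_above {m. odd m \<and> 0 < m \<and> m \<notin> F k}"
    using le_if_not_mem_F by (auto intro!: bdd_aboveI[of _ "3 * 2 ^ k"])
  show ?thesis
    unfolding Gamma_def by (rule cSup_upper[OF _ bdd]) (use assms in \<open>auto simp: odd_pos\<close>)
qed

subsection \<open>Long repeated factors\<close>

lemma same_factor_mult_power2_add:
  assumes ab: "same_factor a b n" and uL: "u + L \<le> n * 2 ^ R"
  shows "same_factor (a * 2 ^ R + u) (b * 2 ^ R + u) L"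
  unfolding same_factor_def
proof (intro allI impI)
  fix i assume "i < L"
  define c where "c = (u + i) div 2 ^ R"
  define v where "v = (u + i) mod 2 ^ R"
  have v: "v < 2 ^ R" unfolding v_def by simp
  have "c < n"
    using uL \<open>i < L\<close> unfolding c_def by (simp add: less_mult_imp_div_less)
  then have letter: "thue_morse (a + c) = thue_morse (b + c)"
    using ab unfolding same_factor_def by blast
  have "x * 2 ^ R + u + i = (x + c) * 2 ^ R + v" for x
    unfolding c_def v_def by (simp add: algebra_simps)
  then show "thue_morse (a * 2 ^ R + u + i) = thue_morse (b * 2 ^ R + u + i)"
    using letter thue_morse_mult_power2_add[OF v] by simp
qed

lemma same_factor_even_witness:
  assumes h: "3 \<le> h" and t: "t = 2 ^ h" and m: "m + t = 3 * t * t + 1"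
  shows "same_factor ((t + 1) * m) ((t + 1 + t * t) * m) m"
proof -
  have "(2::nat) ^ 3 \<le> 2 ^ h" using h by (rule power_increasing) simp
  then have "8 \<le> t" using t by simp
  have tt: "2 ^ (h + h) = t * t" using t by (simp add: power_add)
  have i: "(t + 1) * m = (3 * t + 2) * (t * t) + 1"
  proof -
    have "int (m + t) = int (3 * t * t + 1)" using m by simp
    then have hm: "int m = 3 * int t * int t + 1 - int t" by simp
    have "int ((t + 1) * m) = int ((3 * t + 2) * (t * t) + 1)" by (simp add: hm algebra_simps)
    then show ?thesis by linarith
  qed
  have j: "(t + 1 + t * t) * m = (3 * t + 2 + m) * (t * t) + 1"
    using i by (simp add: algebra_simps)
  have "same_factor (3 * t + 2) (3 * t + 2 + m) 3"
    unfolding same_factor_def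
  proof (intro allI impI)
    fix c :: nat assume "c < 3"
    then have small: "2 + c < 2 ^ h" "3 + c < 2 ^ h" "2 < (2::nat) ^ h"
      using \<open>8 \<le> t\<close> t by auto
    have shifted: "3 * t + 2 + m + c = (3 * 2 ^ h + 2) * 2 ^ h + (3 + c)"
      using m t by (simp add: algebra_simps)
    have "thue_morse (3 * t + 2 + m + c) =
        (thue_morse (3 * 2 ^ h + 2) + bin_ones (3 + c)) mod 2"
      unfolding shifted by (rule thue_morse_mult_power2_add[OF small(2)])
    moreover have unshifted: "3 * t + 2 + c = 3 * 2 ^ h + (2 + c)"
      using t by simp
    have "thue_morse (3 * t + 2 + c) = (thue_morse 3 + bin_ones (2 + c)) mod 2"
      unfolding unshifted by (rule thue_morse_mult_power2_add[OF small(1)])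
    moreover have "thue_morse (3 * 2 ^ h + 2) = (thue_morse 3 + bin_ones 2) mod 2"
      by (rule thue_morse_mult_power2_add[OF small(3)])
    moreover have "c = 0 \<or> c = 1 \<or> c = 2"
      using \<open>c < 3\<close> by auto
    ultimately show "thue_morse (3 * t + 2 + c) = thue_morse (3 * t + 2 + m + c)"
      by (elim disjE) (simp_all add: thue_morse_def bin_ones_small)
  qed
  then have "same_factor ((3 * t + 2) * 2 ^ (h + h) + 1) ((3 * t + 2 + m) * 2 ^ (h + h) + 1) m"
    by (rule same_factor_mult_power2_add) (use tt m \<open>8 \<le> t\<close> in simp)
  then show ?thesis
    using i j tt by simp
qed

lemma same_factor_odd_witness:
  assumes h: "4 \<le> h" and t: "t = 2 ^ h" and m: "m + t = 6 * t * t + 1"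
  shows "same_factor ((4 * t + 4) * m) ((4 * t + 4 + 2 * (t * t)) * m) m"
proof -
  have "(2::nat) ^ 4 \<le> 2 ^ h" using h by (rule power_increasing) simp
  then have "16 \<le> t" using t by simp
  have tt: "2 ^ Suc (h + h) = 2 * (t * t)" using t by (simp add: power_add)
  have i: "(4 * t + 4) * m = (12 * t + 10) * (2 * (t * t)) + 4"
  proof -
    have "int (m + t) = int (6 * t * t + 1)" using m by simp
    then have hm: "int m = 6 * int t * int t + 1 - int t" by simp
    have "int ((4 * t + 4) * m) = int ((12 * t + 10) * (2 * (t * t)) + 4)"
      by (simp add: hm algebra_simps)
    then show ?thesis by linarith
  qed
  have j: "(4 * t + 4 + 2 * (t * t)) * m = (12 * t + 10 + m) * (2 * (t * t)) + 4"
    using i by (simp add: algebra_simps)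
  have "same_factor (12 * t + 10) (12 * t + 10 + m) 3"
    unfolding same_factor_def
  proof (intro allI impI)
    fix c :: nat assume "c < 3"
    then have small: "10 + c < 2 ^ h" "11 + c < 2 ^ h" "11 < (2::nat) ^ h"
      using \<open>16 \<le> t\<close> t by auto
    have shifted: "12 * t + 10 + m + c = (6 * 2 ^ h + 11) * 2 ^ h + (11 + c)"
      using m t by (simp add: algebra_simps)
    have "thue_morse (12 * t + 10 + m + c) =
        (thue_morse (6 * 2 ^ h + 11) + bin_ones (11 + c)) mod 2"
      unfolding shifted by (rule thue_morse_mult_power2_add[OF small(2)])
    moreover have unshifted: "12 * t + 10 + c = 12 * 2 ^ h + (10 + c)"
      using t by simp
    have "thue_morse (12 * t + 10 + c) = (thue_morse 12 + bin_ones (10 + c)) mod 2"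
      unfolding unshifted by (rule thue_morse_mult_power2_add[OF small(1)])
    moreover have "thue_morse (6 * 2 ^ h + 11) = (thue_morse 6 + bin_ones 11) mod 2"
      by (rule thue_morse_mult_power2_add[OF small(3)])
    moreover have "c = 0 \<or> c = 1 \<or> c = 2"
      using \<open>c < 3\<close> by auto
    ultimately show "thue_morse (12 * t + 10 + c) = thue_morse (12 * t + 10 + m + c)"
      by (elim disjE) (simp_all add: thue_morse_def bin_ones_small)
  qed
  then have "same_factor ((12 * t + 10) * 2 ^ Suc (h + h) + 4)
      ((12 * t + 10 + m) * 2 ^ Suc (h + h) + 4) m"
    by (rule same_factor_mult_power2_add) (use tt m \<open>16 \<le> t\<close> in simp)
  then show ?thesis
    using i j tt by simp
qed

definition witness_period :: "nat \<Rightarrow> nat" where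
  "witness_period R = 3 * 2 ^ R + 1 - 2 ^ (R div 2)"

definition witness_block :: "nat \<Rightarrow> nat" where
  "witness_block R = (if even R then 2 ^ (R div 2) + 1 else 4 * 2 ^ (R div 2) + 4)"

lemma same_factor_witness:
  assumes "9 \<le> R"
  defines "m \<equiv> witness_period R" and "i \<equiv> witness_block R"
  shows "same_factor (i * m) ((i + 2 ^ R) * m) m"
proof -
  define h where "h = R div 2"
  define t where "t = (2::nat) ^ h"
  have "t \<le> t * t" unfolding t_def by simp
  show ?thesis
  proof (cases "even R")
    case True
    then have R: "R = h + h" unfolding h_def by auto
    then have P: "2 ^ R = t * t" unfolding t_def by (simp add: power_add)
    have "m + t = 3 * t * t + 1"
      unfolding m_def witness_period_def h_def[symmetric] t_def[symmetric] P
      using \<open>t \<le> t * t\<close> by (simp add: mult.assoc; linarith)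
    from same_factor_even_witness[OF _ t_def this] show ?thesis
      using assms R True P unfolding i_def witness_block_def h_def t_def by simp
  next
    case False
    then have R: "R = Suc (h + h)" unfolding h_def by presburger
    then have P: "2 ^ R = 2 * (t * t)" unfolding t_def by (simp add: power_add)
    have "m + t = 6 * t * t + 1"
      unfolding m_def witness_period_def h_def[symmetric] t_def[symmetric] P
      using \<open>t \<le> t * t\<close> by (simp add: mult.assoc; linarith)
    from same_factor_odd_witness[OF _ t_def this] show ?thesis
      using assms R False P unfolding i_def witness_block_def h_def t_def by simp
  qed
qed

lemma odd_witness_period: "2 \<le> R \<Longrightarrow> odd (witness_period R)"
proof -
  assume "2 \<le> R"
  then have "even ((2::nat) ^ R)" "even ((2::nat) ^ (R div 2))" "(2::nat) ^ (R div 2) \<le> 2 ^ R"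
    by (auto intro: power_increasing)
  then show ?thesis
    unfolding witness_period_def by presburger
qed

lemma witness_period_le_Gamma:
  assumes R: "9 \<le> R" and k: "witness_block R + 2 ^ R < k"
  shows "witness_period R \<le> Gamma k"
proof (rule le_Gamma)
  show "odd (witness_period R)"
    using R by (simp add: odd_witness_period)
  have "witness_block R < witness_block R + 2 ^ R"
    by simp
  then show "witness_period R \<notin> F k"
    unfolding mem_F_iff using same_factor_witness[OF R] k by blast
qed

lemma witness_block_le: "witness_block R \<le> 4 * 2 ^ (R div 2) + 4"
  unfolding witness_block_def by auto

text \<open>If \<open>k\<close> is too close to \<open>2\<^sup>R\<close> for the witness of level \<open>R\<close>, the witness of level \<open>R - 1\<close>
  still gives \<open>\<Gamma>(k) \<ge> 3\<cdot>2\<^sup>R\<^sup>-\<^sup>1 - O(2\<^sup>R\<^sup>/\<^sup>2)\<close>, which suffices since \<open>k \<approx> 2\<^sup>R\<close>.\<close>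
lemma Gamma_lower_dyadic:
  assumes R: "11 \<le> R" and k: "2 ^ R < k" "k \<le> 2 ^ (R + 1)"
  shows "3 * k \<le> 2 * Gamma k + 26 * 2 ^ (R div 2)"
proof -
  define T where "T = (2::nat) ^ (R div 2)"
  define Q where "Q = (2::nat) ^ (R - 1)"
  have "(2::nat) ^ R = 2 ^ Suc (R - 1)" using R by (simp del: power_Suc)
  then have PQ: "(2::nat) ^ R = 2 * Q" unfolding Q_def by simp
  have T1: "1 \<le> T" unfolding T_def by simp
  have TR: "T \<le> 2 ^ R" unfolding T_def by (rule power_increasing) auto
  show ?thesis
  proof (cases "witness_block R + 2 ^ R < k")
    case True
    then have "witness_period R \<le> Gamma k"
      using R by (intro witness_period_le_Gamma) simp_all
    then show ?thesis
      using k TR unfolding witness_period_def T_def[symmetric] by simp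
  next
    case False
    define T' where "T' = (2::nat) ^ ((R - 1) div 2)"
    have T'T: "T' \<le> T" unfolding T'_def T_def by (rule power_increasing) auto
    have "(2::nat) ^ ((R - 1) div 2 + 3) \<le> 2 ^ (R - 1)" using R by (intro power_increasing) auto
    then have T'Q: "8 * T' \<le> Q" unfolding T'_def Q_def by (simp add: power_add)
    have "(2::nat) ^ 1 \<le> 2 ^ ((R - 1) div 2)" using R by (intro power_increasing) auto
    then have T'2: "2 \<le> T'" unfolding T'_def by simp
    have "witness_block (R - 1) \<le> 4 * T' + 4" unfolding T'_def by (rule witness_block_le)
    then have "witness_block (R - 1) + 2 ^ (R - 1) < k"
      using k PQ T'Q T'2 unfolding Q_def by linarith
    then have "witness_period (R - 1) \<le> Gamma k"
      using R by (intro witness_period_le_Gamma) simp_all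
    moreover have "T' \<le> 2 ^ (R - 1)" unfolding T'_def by (rule power_increasing) auto
    ultimately have G: "3 * Q + 1 - T' \<le> Gamma k"
      unfolding witness_period_def T'_def[symmetric] Q_def by simp
    have "k \<le> 2 ^ R + 4 * T + 4" using False witness_block_le[of R] unfolding T_def by linarith
    then show ?thesis using G PQ T'T T1 T'Q unfolding T_def[symmetric] by linarith
  qed
qed

lemma Gamma_lower_sqrt:
  assumes "2 ^ 12 < k"
  shows "3 * real k \<le> 2 * real (Gamma k) + 26 * sqrt (real k)"
proof -
  have "1 \<le> k - 1"
    using assms by simp
  then obtain R where R: "2 ^ R \<le> k - 1" "k - 1 < 2 ^ (R + 1)"
    using ex_power_ivl1[of 2 "k - 1"] by auto
  then have Rk: "2 ^ R < k" "k \<le> 2 ^ (R + 1)" using assms by auto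
  have "11 \<le> R"
  proof (rule ccontr)
    assume "\<not> 11 \<le> R"
    then have "(2::nat) ^ (R + 1) \<le> 2 ^ 12" by (intro power_increasing) auto
    then show False using Rk assms by simp
  qed
  define T where "T = (2::nat) ^ (R div 2)"
  have "T * T = 2 ^ (R div 2 + R div 2)" unfolding T_def by (simp add: power_add)
  also have "\<dots> \<le> 2 ^ R" by (rule power_increasing) auto
  finally have "T * T \<le> k"
    using Rk by linarith
  then have "real (T * T) \<le> real k"
    by (rule of_nat_mono)
  then have "real T ^ 2 \<le> real k"
    by (simp only: of_nat_mult power2_eq_square)
  then have "real T \<le> sqrt (real k)" by (rule real_le_rsqrt)
  moreover have "3 * k \<le> 2 * Gamma k + 26 * T"
    unfolding T_def by (rule Gamma_lower_dyadic[OF \<open>11 \<le> R\<close> Rk])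
  then have "real (3 * k) \<le> real (2 * Gamma k + 26 * T)"
    by (rule of_nat_mono)
  ultimately show ?thesis by simp
qed

subsection \<open>The limit inferior\<close>

lemma eventually_Gamma_ratio_gt:
  assumes "0 < \<epsilon>"
  shows "eventually (\<lambda>k. 3 / 2 - \<epsilon> < real (Gamma k) / real k) sequentially"
proof -
  obtain K :: nat where K: "(13 / \<epsilon>) ^ 2 < real K"
    using reals_Archimedean2 by blast
  have "3 / 2 - \<epsilon> < real (Gamma k) / real k" if k: "max (2 ^ 12 + 1) K \<le> k" for k
  proof -
    have "0 < real k" "real K \<le> real k"
      using k by simp_all
    then have "13 / \<epsilon> < sqrt (real k)"
      using K by (intro real_less_rsqrt) linarith
    then have "13 < \<epsilon> * sqrt (real k)"
      using assms by (simp add: field_simps)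
    then have "2 * 13 * sqrt (real k) < 2 * (\<epsilon> * sqrt (real k)) * sqrt (real k)"
      using \<open>0 < real k\<close> by (intro mult_strict_right_mono) simp_all
    also have "\<dots> = 2 * \<epsilon> * sqrt (real k) ^ 2"
      by (simp add: power2_eq_square)
    finally have "26 * sqrt (real k) < 2 * \<epsilon> * real k"
      by simp
    moreover have "3 * real k \<le> 2 * real (Gamma k) + 26 * sqrt (real k)"
      using k by (intro Gamma_lower_sqrt) simp
    ultimately show ?thesis
      using \<open>0 < real k\<close> by (simp add: field_simps)
  qed
  then show ?thesis
    unfolding eventually_sequentially by blast
qed

lemma liminf_ereal_eqI:
  fixes f :: "nat \<Rightarrow> real" and r :: "nat \<Rightarrow> nat"
  assumes r: "strict_mono r" and upper: "\<And>n. f (r n) \<le> c"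
    and lower: "\<And>\<epsilon>. 0 < \<epsilon> \<Longrightarrow> eventually (\<lambda>k. c - \<epsilon> < f k) sequentially"
  shows "liminf (\<lambda>k. ereal (f k)) = ereal c"
proof (rule antisym)
  have "liminf (\<lambda>k. ereal (f k)) \<le> liminf ((\<lambda>k. ereal (f k)) \<circ> r)"
    by (rule liminf_subseq_mono[OF r])
  also have "\<dots> \<le> ereal c"
    using upper by (intro Liminf_le) simp_all
  finally show "liminf (\<lambda>k. ereal (f k)) \<le> ereal c" .
  show "ereal c \<le> liminf (\<lambda>k. ereal (f k))"
    unfolding le_Liminf_iff
  proof (intro allI impI)
    fix y assume "y < ereal c"
    then show "eventually (\<lambda>k. y < ereal (f k)) sequentially"
    proof (cases y)
      case (real b)
      then have "eventually (\<lambda>k. b < f k) sequentially"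
        using lower[of "c - b"] \<open>y < ereal c\<close> by simp
      then show ?thesis
        unfolding real by (rule eventually_mono) simp
    qed simp_all
  qed
qed

theorem theorem2:
  shows "liminf (\<lambda>k. ereal (real (Gamma k) / real k)) = ereal (3 / 2)"
proof (rule liminf_ereal_eqI)
  show "strict_mono (\<lambda>n. 2 ^ (n + 1) :: nat)"
    unfolding strict_mono_Suc_iff by simp
  fix n
  have "Gamma (2 ^ (n + 1)) \<le> 3 * 2 ^ n"
    by (rule Gamma_upper) simp
  then have "real (Gamma (2 ^ (n + 1))) \<le> real (3 * 2 ^ n)"
    by (rule of_nat_mono)
  then show "real (Gamma (2 ^ (n + 1))) / real (2 ^ (n + 1)) \<le> 3 / 2"
    by (simp add: field_simps)
qed (rule eventually_Gamma_ratio_gt)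

end
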